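(* Let $T>0$, $\tau>0$ and $x\in L^\infty(-\tau,T)$. For $t\in[0,T]$ let $x_t(s)=x(t-s)$, $s\in[0,\tau]$, and for $k>0$ let $\mathrm{LIE}_k(x_t)=\frac1k\log\big(\int_{t-\tau}^t\exp(k\,x(s))\,\mathrm{d}s\big)$. Then for every $p\in[1,\infty)$, \[ \int_0^T\big|\operatorname*{ess\,sup}x_t-\mathrm{LIE}_k(x_t)\big|^p\,\mathrm{d}t\to0\qquad\text{as }k\to\infty, \] where $\operatorname*{ess\,sup}x_t$ is the essential supremum of $x_t$ over $[0,\tau]$. *)

theory Defs
  imports "HOL-Probability.Probability"
begin

definition hist :: "(real \<Rightarrow> real) \<Rightarrow> real \<Rightarrow> real \<Rightarrow> real" where
  "hist x t = (\<lambda>s. x (t - s))"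

definition esssup_hist :: "real \<Rightarrow> (real \<Rightarrow> real) \<Rightarrow> real \<Rightarrow> ereal" where
  "esssup_hist tau x t = esssup (restrict_space lebesgue {0..tau}) (\<lambda>s. ereal (hist x t s))"

definition LIE :: "real \<Rightarrow> real \<Rightarrow> (real \<Rightarrow> real) \<Rightarrow> real \<Rightarrow> real" where
  "LIE k tau x t = (1 / k) * ln (LINT s:{t - tau..t}|lebesgue. exp (k * x s))"

end

theory Submission
  imports Defs
begin

text \<open>
  Let \<open>y\<close> be bounded by \<open>C\<close> on a finite measure space of mass \<open>L > 0\<close>, with essential
  supremum \<open>E\<close>. Then \<open>(1/k) ln \<integral> exp (k y)\<close> is at most \<open>E + ln L / k\<close>, and for every
  \<open>b < E\<close> it is at least \<open>b + ln \<mu>{y > b} / k\<close>, where \<open>\<mu>{y > b} > 0\<close>. Hence it converges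
  to \<open>E\<close>, and for \<open>k \<ge> 1\<close> it stays within \<open>2C + |ln L|\<close> of \<open>E\<close>. Applied to the history
  segments \<open>x\<^sub>t\<close> on \<open>[0, \<tau>]\<close>, this gives pointwise convergence of the integrand on \<open>[0, T]\<close>
  together with a uniform bound, and dominated convergence concludes.
\<close>

definition log_integral_exp :: "'a measure \<Rightarrow> real \<Rightarrow> ('a \<Rightarrow> real) \<Rightarrow> real" where
  "log_integral_exp M k y = (1 / k) * ln (\<integral>s. exp (k * y s) \<partial>M)"

context finite_measure
begin

lemma esssup_real_bounded:
  fixes y :: "'a \<Rightarrow> real"
  assumes nontrivial: "0 < measure M (space M)" and y: "y \<in> borel_measurable M"
    and bounded: "AE s in M. \<bar>y s\<bar> \<le> C"
  shows "ereal (real_of_ereal (esssup M (\<lambda>s. ereal (y s)))) = esssup M (\<lambda>s. ereal (y s))"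
    and "\<bar>real_of_ereal (esssup M (\<lambda>s. ereal (y s)))\<bar> \<le> C"
proof -
  have "esssup M (\<lambda>s. ereal (y s)) \<le> ereal C"
    using y bounded by (intro esssup_I) (auto elim!: eventually_mono)
  moreover have "esssup M (\<lambda>s. ereal (- C)) \<le> esssup M (\<lambda>s. ereal (y s))"
    using bounded by (intro esssup_AE_mono) (auto elim!: eventually_mono)
  then have "ereal (- C) \<le> esssup M (\<lambda>s. ereal (y s))"
    using nontrivial by (simp add: esssup_const emeasure_eq_measure)
  ultimately show "ereal (real_of_ereal (esssup M (\<lambda>s. ereal (y s)))) = esssup M (\<lambda>s. ereal (y s))"
    and "\<bar>real_of_ereal (esssup M (\<lambda>s. ereal (y s)))\<bar> \<le> C"
    by (cases "esssup M (\<lambda>s. ereal (y s))"; simp)+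
qed

lemma AE_le_real_esssup:
  fixes y :: "'a \<Rightarrow> real"
  assumes "0 < measure M (space M)" and "y \<in> borel_measurable M" and "AE s in M. \<bar>y s\<bar> \<le> C"
  shows "AE s in M. y s \<le> real_of_ereal (esssup M (\<lambda>s. ereal (y s)))"
proof -
  have "AE s in M. ereal (y s) \<le> ereal (real_of_ereal (esssup M (\<lambda>s. ereal (y s))))"
    unfolding esssup_real_bounded(1)[OF assms] by (rule esssup_AE)
  then show ?thesis
    by simp
qed

lemma integrable_exp_mult_bounded:
  fixes y :: "'a \<Rightarrow> real"
  assumes y: "y \<in> borel_measurable M" and bounded: "AE s in M. \<bar>y s\<bar> \<le> C"
  shows "integrable M (\<lambda>s. exp (k * y s))"
proof -
  have "AE s in M. norm (exp (k * y s)) \<le> exp (\<bar>k\<bar> * C)"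
    using bounded by eventually_elim (simp add: abs_mult mult_left_mono order_trans[OF abs_ge_self])
  then show ?thesis
    using y by (intro integrable_const_bound) auto
qed

lemma integral_exp_pos:
  fixes y :: "'a \<Rightarrow> real"
  assumes nontrivial: "0 < measure M (space M)" and int: "integrable M (\<lambda>s. exp (k * y s))"
  shows "0 < (\<integral>s. exp (k * y s) \<partial>M)"
proof -
  have "(\<integral>s. exp (k * y s) \<partial>M) \<noteq> 0"
  proof
    assume "(\<integral>s. exp (k * y s) \<partial>M) = 0"
    then have "AE s in M. False"
      using integral_nonneg_eq_0_iff_AE[OF int] by simp
    then show False
      using nontrivial by (simp add: ae_filter_eq_bot_iff emeasure_eq_measure)
  qed
  moreover have "0 \<le> (\<integral>s. exp (k * y s) \<partial>M)"
    by (intro integral_nonneg_AE) simp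
  ultimately show ?thesis
    by linarith
qed

lemma measure_mult_exp_le_integral_exp:
  fixes y :: "'a \<Rightarrow> real"
  assumes "0 \<le> k" and A: "A \<in> sets M" and lower: "AE s in M. s \<in> A \<longrightarrow> a \<le> y s"
    and int: "integrable M (\<lambda>s. exp (k * y s))"
  shows "measure M A * exp (k * a) \<le> (\<integral>s. exp (k * y s) \<partial>M)"
proof -
  have "measure M A * exp (k * a) = (\<integral>s. indicator A s * exp (k * a) \<partial>M)"
    using A by simp
  also have "\<dots> \<le> (\<integral>s. exp (k * y s) \<partial>M)"
  proof (rule integral_mono_AE[OF _ int])
    show "integrable M (\<lambda>s. indicator A s * exp (k * a))"
      using A by (intro integrable_mult_left integrable_real_indicator) (simp_all add: less_top[symmetric])
    show "AE s in M. indicator A s * exp (k * a) \<le> exp (k * y s)"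
      using lower by eventually_elim (use \<open>0 \<le> k\<close> in \<open>auto simp: indicator_def mult_left_mono\<close>)
  qed
  finally show ?thesis .
qed

lemma log_integral_exp_ge:
  fixes y :: "'a \<Rightarrow> real"
  assumes k: "0 < k" and A: "A \<in> sets M" "0 < measure M A"
    and lower: "AE s in M. s \<in> A \<longrightarrow> a \<le> y s" and int: "integrable M (\<lambda>s. exp (k * y s))"
  shows "a + ln (measure M A) / k \<le> log_integral_exp M k y"
proof -
  have "ln (measure M A) + k * a = ln (measure M A * exp (k * a))"
    using A by (simp add: ln_mult)
  also have "\<dots> \<le> ln (\<integral>s. exp (k * y s) \<partial>M)"
    using measure_mult_exp_le_integral_exp[OF _ A(1) lower int] k A by (intro ln_mono) auto
  finally have "(ln (measure M A) + k * a) / k \<le> ln (\<integral>s. exp (k * y s) \<partial>M) / k"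
    using k by (intro divide_right_mono) auto
  then show ?thesis
    using k by (simp add: log_integral_exp_def add_divide_distrib)
qed

lemma log_integral_exp_le:
  fixes y :: "'a \<Rightarrow> real"
  assumes k: "0 < k" and nontrivial: "0 < measure M (space M)"
    and upper: "AE s in M. y s \<le> b" and int: "integrable M (\<lambda>s. exp (k * y s))"
  shows "log_integral_exp M k y \<le> b + ln (measure M (space M)) / k"
proof -
  have "(\<integral>s. exp (k * y s) \<partial>M) \<le> (\<integral>s. exp (k * b) \<partial>M)"
    using upper k by (intro integral_mono_AE int) (auto elim!: eventually_mono)
  then have "ln (\<integral>s. exp (k * y s) \<partial>M) \<le> ln (measure M (space M) * exp (k * b))"
    using integral_exp_pos[OF nontrivial int] by simp
  also have "\<dots> = ln (measure M (space M)) + k * b"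
    using nontrivial by (simp add: ln_mult)
  finally have "ln (\<integral>s. exp (k * y s) \<partial>M) / k \<le> (ln (measure M (space M)) + k * b) / k"
    using k by (intro divide_right_mono) auto
  then show ?thesis
    using k by (simp add: log_integral_exp_def add_divide_distrib)
qed

lemma log_integral_exp_tendsto_esssup:
  fixes y :: "'a \<Rightarrow> real"
  assumes nontrivial: "0 < measure M (space M)" and y: "y \<in> borel_measurable M"
    and bounded: "AE s in M. \<bar>y s\<bar> \<le> C"
  shows "((\<lambda>k. log_integral_exp M k y) \<longlongrightarrow> real_of_ereal (esssup M (\<lambda>s. ereal (y s)))) at_top"
proof -
  define E where "E = real_of_ereal (esssup M (\<lambda>s. ereal (y s)))"
  have int: "integrable M (\<lambda>s. exp (k * y s))" for k
    using y bounded by (rule integrable_exp_mult_bounded)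
  have vanishing: "((\<lambda>k. c + ln m / k) \<longlongrightarrow> c) at_top" for c m :: real
    using tendsto_add[OF tendsto_const tendsto_divide_0[OF tendsto_const
        filterlim_at_top_imp_at_infinity[OF filterlim_ident]]] by simp
  show ?thesis
    unfolding E_def[symmetric]
  proof (rule order_tendstoI)
    fix a assume "E < a"
    have "\<forall>\<^sub>F k in at_top. E + ln (measure M (space M)) / k < a"
      using order_tendstoD(2)[OF vanishing \<open>E < a\<close>] .
    moreover have "\<forall>\<^sub>F k in at_top. log_integral_exp M k y \<le> E + ln (measure M (space M)) / k"
      using eventually_gt_at_top[of 0]
    proof eventually_elim
      case (elim k)
      show ?case
        unfolding E_def by (rule log_integral_exp_le[OF elim nontrivial AE_le_real_esssup[OF assms] int])
    qed
    ultimately show "\<forall>\<^sub>F k in at_top. log_integral_exp M k y < a"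
      by eventually_elim simp
  next
    fix a assume "a < E"
    define b where "b = (a + E) / 2"
    define A where "A = {s \<in> space M. b < y s}"
    have A: "A \<in> sets M"
      unfolding A_def using y by measurable
    have "ereal b < ereal E"
      using \<open>a < E\<close> by (simp add: b_def)
    then have "ereal b < esssup M (\<lambda>s. ereal (y s))"
      unfolding E_def esssup_real_bounded(1)[OF assms] .
    then have "0 < emeasure M A"
      using esssup_pos_measure[of "\<lambda>s. ereal (y s)" M "ereal b"] y by (simp add: A_def)
    then have "0 < measure M A"
      by (simp add: emeasure_eq_measure)
    have "\<forall>\<^sub>F k in at_top. a < b + ln (measure M A) / k"
      using order_tendstoD(1)[OF vanishing] \<open>a < E\<close> by (simp add: b_def)
    moreover have "\<forall>\<^sub>F k in at_top. b + ln (measure M A) / k \<le> log_integral_exp M k y"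
      using eventually_gt_at_top[of 0]
    proof eventually_elim
      case (elim k)
      show ?case
        by (rule log_integral_exp_ge[OF elim A \<open>0 < measure M A\<close> _ int]) (auto simp: A_def)
    qed
    ultimately show "\<forall>\<^sub>F k in at_top. a < log_integral_exp M k y"
      by eventually_elim simp
  qed
qed

lemma abs_esssup_minus_log_integral_exp_le:
  fixes y :: "'a \<Rightarrow> real"
  assumes nontrivial: "0 < measure M (space M)" and y: "y \<in> borel_measurable M"
    and bounded: "AE s in M. \<bar>y s\<bar> \<le> C" and k: "1 \<le> k"
  shows "\<bar>real_of_ereal (esssup M (\<lambda>s. ereal (y s))) - log_integral_exp M k y\<bar>
           \<le> 2 * C + \<bar>ln (measure M (space M))\<bar>"
proof -
  define E where "E = real_of_ereal (esssup M (\<lambda>s. ereal (y s)))"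
  define L where "L = measure M (space M)"
  have int: "integrable M (\<lambda>s. exp (k * y s))"
    using y bounded by (rule integrable_exp_mult_bounded)
  have "log_integral_exp M k y \<le> E + ln L / k"
    unfolding E_def L_def
    using k by (intro log_integral_exp_le nontrivial int AE_le_real_esssup[OF assms(1-3)]) auto
  moreover have "- C + ln L / k \<le> log_integral_exp M k y"
    unfolding L_def using k nontrivial bounded
    by (intro log_integral_exp_ge int) (auto elim!: eventually_mono)
  moreover have "\<bar>ln L\<bar> / k \<le> \<bar>ln L\<bar> / 1"
    using k by (intro divide_left_mono) auto
  then have "\<bar>ln L / k\<bar> \<le> \<bar>ln L\<bar>"
    using k by (simp add: abs_div)
  moreover have "\<bar>E\<bar> \<le> C"
    unfolding E_def by (rule esssup_real_bounded(2)[OF assms(1-3)])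
  ultimately show ?thesis
    unfolding E_def[symmetric] L_def[symmetric] by linarith
qed

end

lemma integral_tendsto_zero_dominated_at_top:
  fixes F :: "real \<Rightarrow> 'a \<Rightarrow> 'b::{banach, second_countable_topology}" and w :: "'a \<Rightarrow> real"
  assumes w: "integrable M w"
    and lim: "AE x in M. ((\<lambda>k. F k x) \<longlongrightarrow> 0) at_top"
    and bound: "\<forall>\<^sub>F k in at_top. AE x in M. norm (F k x) \<le> w x"
  shows "((\<lambda>k. integral\<^sup>L M (F k)) \<longlongrightarrow> 0) at_top"
proof -
  \<comment> \<open>No measurability of \<open>F k\<close> is needed: a non-integrable \<open>F k\<close> has integral 0 and
    can be replaced by 0 without destroying the pointwise convergence to the limit 0.\<close>
  define G where "G k = (if integrable M (F k) then F k else (\<lambda>_. 0))" for k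
  have "((\<lambda>k. integral\<^sup>L M (G k)) \<longlongrightarrow> integral\<^sup>L M (\<lambda>_. 0)) at_top"
  proof (rule integral_dominated_convergence_at_top[OF _ _ w])
    show "G k \<in> borel_measurable M" for k
      by (simp add: G_def)
    show "AE x in M. ((\<lambda>k. G k x) \<longlongrightarrow> 0) at_top"
      using lim by eventually_elim
        (rule Lim_null_comparison[OF always_eventually tendsto_norm_zero], auto simp: G_def)
    show "\<forall>\<^sub>F k in at_top. AE x in M. norm (G k x) \<le> w x"
      using bound by eventually_elim
        (auto simp: G_def elim!: eventually_mono intro: order_trans[OF norm_ge_zero])
  qed simp
  moreover have "integral\<^sup>L M (G k) = integral\<^sup>L M (F k)" for k
    by (simp add: G_def not_integrable_integral_eq)
  ultimately show ?thesis
    by simp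
qed

lemma AE_lebesgue_reflect:
  fixes t :: real
  assumes "AE u in lebesgue. P u"
  shows "AE s in lebesgue. P (t - s)"
proof -
  have reflect: "(\<lambda>s. t + (-1) * s) \<in> lebesgue \<rightarrow>\<^sub>M lebesgue"
    using lebesgue_affine_measurable[where c = "\<lambda>_. -1" and t = t] by simp
  have "AE u in density (distr lebesgue lebesgue (\<lambda>s. t + (-1) * s)) (\<lambda>_. ennreal \<bar>-1\<bar>). P u"
    using assms by (subst (asm) lebesgue_real_affine[of "-1" t]) simp_all
  then have "AE u in distr lebesgue lebesgue (\<lambda>s. t + (-1) * s). P u"
    by (simp add: AE_density)
  then show ?thesis
    using AE_distrD[OF reflect] by simp
qed

lemma set_integral_lebesgue_reflect:
  fixes f :: "real \<Rightarrow> 'a::euclidean_space"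
  shows "(LINT u:A|lebesgue. f u) = (LINT s:{s. t - s \<in> A}|lebesgue. f (t - s))"
  unfolding set_lebesgue_integral_def
  by (subst lebesgue_integral_real_affine[where c = "-1" and t = t])
     (auto intro!: Bochner_Integration.integral_cong split: split_indicator)

lemma hist_borel_measurable_window:
  assumes x: "set_borel_measurable lebesgue {-tau<..<T} x" and t: "t \<in> {0..T}"
  shows "hist x t \<in> borel_measurable (restrict_space lebesgue {0..tau})"
proof -
  have "(\<lambda>u. indicator {t - tau..t} u * (indicator {-tau<..<T} u *\<^sub>R x u)) \<in> borel_measurable lebesgue"
    using x unfolding set_borel_measurable_def
    by (intro borel_measurable_times borel_measurable_indicator) simp_all
  then have "(\<lambda>u. indicator {t - tau..t} u * x u) \<in> borel_measurable lebesgue"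
    by (rule measurable_discrete_difference[where X = "{-tau, T}"])
       (use t in \<open>auto simp: indicator_def\<close>)
  then have "(\<lambda>s. indicator {t - tau..t} (t + (-1) *\<^sub>R s) * x (t + (-1) *\<^sub>R s))
      \<in> borel_measurable lebesgue"
    by (rule borel_measurable_affine) simp
  moreover have "(\<lambda>s. indicator {t - tau..t} (t + (-1) *\<^sub>R s) * x (t + (-1) *\<^sub>R s))
      = (\<lambda>s. indicator {0..tau} s *\<^sub>R hist x t s)"
    by (auto simp: hist_def indicator_def)
  ultimately show ?thesis
    by (subst borel_measurable_restrict_space_iff) auto
qed

lemma hist_AE_bounded_window:
  assumes C: "AE s in lebesgue. s \<in> {-tau<..<T} \<longrightarrow> \<bar>x s\<bar> \<le> C" and t: "t \<in> {0..T}"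
  shows "AE s in restrict_space lebesgue {0..tau}. \<bar>hist x t s\<bar> \<le> C"
proof -
  have "AE s in lebesgue. t - s \<in> {-tau<..<T} \<longrightarrow> \<bar>x (t - s)\<bar> \<le> C"
    using C by (rule AE_lebesgue_reflect)
  moreover have "AE s in lebesgue. s \<notin> {0, tau}"
    by (rule AE_discrete_difference) auto
  ultimately have "AE s in lebesgue. s \<in> {0..tau} \<longrightarrow> \<bar>hist x t s\<bar> \<le> C"
    by eventually_elim (use t in \<open>auto simp: hist_def\<close>)
  then show ?thesis
    by (subst AE_restrict_space_iff) auto
qed

lemma LIE_eq_log_integral_exp_hist:
  "LIE k tau x t = log_integral_exp (restrict_space lebesgue {0..tau}) k (hist x t)"
proof -
  have "(LINT u:{t - tau..t}|lebesgue. exp (k * x u))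
      = (LINT s:{0..tau}|lebesgue. exp (k * hist x t s))"
    by (subst set_integral_lebesgue_reflect[where t = t])
       (auto simp: hist_def intro!: arg_cong2[where f = "set_lebesgue_integral lebesgue"])
  also have "\<dots> = (\<integral>s. exp (k * hist x t s) \<partial>restrict_space lebesgue {0..tau})"
    unfolding set_lebesgue_integral_def by (subst integral_restrict_space) auto
  finally show ?thesis
    unfolding LIE_def log_integral_exp_def by simp
qed

lemma finite_measure_restrict_Icc: "finite_measure (restrict_space lebesgue {a..b::real})"
  by (rule finite_measureI) (simp add: space_restrict_space emeasure_restrict_space emeasure_lborel_Icc_eq)

lemma measure_space_restrict_Icc:
  "a \<le> b \<Longrightarrow> measure (restrict_space lebesgue {a..b::real}) (space (restrict_space lebesgue {a..b})) = b - a"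
  by (simp add: space_restrict_space measure_restrict_space)

lemma LIE_tendsto_esssup_hist:
  assumes tau: "0 < tau" and t: "t \<in> {0..T}"
    and x: "set_borel_measurable lebesgue {-tau<..<T} x"
    and C: "AE s in lebesgue. s \<in> {-tau<..<T} \<longrightarrow> \<bar>x s\<bar> \<le> C"
  shows "((\<lambda>k. LIE k tau x t) \<longlongrightarrow> real_of_ereal (esssup_hist tau x t)) at_top"
  unfolding LIE_eq_log_integral_exp_hist esssup_hist_def
  by (rule finite_measure.log_integral_exp_tendsto_esssup[OF finite_measure_restrict_Icc])
     (use tau measure_space_restrict_Icc[of 0 tau] hist_borel_measurable_window[OF x t]
        hist_AE_bounded_window[OF C t] in auto)

lemma abs_esssup_hist_minus_LIE_le:
  assumes tau: "0 < tau" and t: "t \<in> {0..T}"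
    and x: "set_borel_measurable lebesgue {-tau<..<T} x"
    and C: "AE s in lebesgue. s \<in> {-tau<..<T} \<longrightarrow> \<bar>x s\<bar> \<le> C"
    and k: "1 \<le> k"
  shows "\<bar>real_of_ereal (esssup_hist tau x t) - LIE k tau x t\<bar> \<le> 2 * C + \<bar>ln tau\<bar>"
  unfolding LIE_eq_log_integral_exp_hist esssup_hist_def
  using finite_measure.abs_esssup_minus_log_integral_exp_le[OF finite_measure_restrict_Icc
      _ hist_borel_measurable_window[OF x t] hist_AE_bounded_window[OF C t] k]
    tau measure_space_restrict_Icc[of 0 tau]
  by simp

theorem lemma4p4:
  fixes T tau p :: real and x :: "real \<Rightarrow> real"
  assumes "T > 0" and "tau > 0"
    and "set_borel_measurable lebesgue {-tau<..<T} x"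
    and "\<exists>C. AE s in lebesgue. s \<in> {-tau<..<T} \<longrightarrow> \<bar>x s\<bar> \<le> C"
    and "1 \<le> p"
  shows "((\<lambda>k. LINT t:{0..T}|lebesgue.
            \<bar>real_of_ereal (esssup_hist tau x t) - LIE k tau x t\<bar> powr p) \<longlongrightarrow> 0) at_top"
proof -
  obtain C where C: "AE s in lebesgue. s \<in> {-tau<..<T} \<longrightarrow> \<bar>x s\<bar> \<le> C"
    using assms(4) by blast
  let ?gap = "\<lambda>k t. \<bar>real_of_ereal (esssup_hist tau x t) - LIE k tau x t\<bar>"
  have pointwise: "((\<lambda>k. ?gap k t powr p) \<longlongrightarrow> 0) at_top" if "t \<in> {0..T}" for t
  proof -
    have "((\<lambda>k. LIE k tau x t - real_of_ereal (esssup_hist tau x t)) \<longlongrightarrow> 0) at_top"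
      using LIE_tendsto_esssup_hist[OF assms(2) that assms(3) C] by (simp add: LIM_zero_iff)
    then have "((\<lambda>k. ?gap k t) \<longlongrightarrow> 0) at_top"
      by (subst abs_minus_commute) (rule tendsto_rabs_zero)
    then show ?thesis
      using assms(5) by (intro tendsto_zero_powrI) auto
  qed
  have bounded: "?gap k t powr p \<le> (2 * C + \<bar>ln tau\<bar>) powr p" if "t \<in> {0..T}" "1 \<le> k" for k t
    using abs_esssup_hist_minus_LIE_le[OF assms(2) that(1) assms(3) C that(2)] assms(5)
    by (intro powr_mono2) auto
  show ?thesis
    unfolding set_lebesgue_integral_def
  proof (rule integral_tendsto_zero_dominated_at_top)
    show "integrable lebesgue (\<lambda>t. indicator {0..T} t * (2 * C + \<bar>ln tau\<bar>) powr p)"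
      using assms(1) by (intro integrable_mult_left integrable_real_indicator) auto
    show "AE t in lebesgue. ((\<lambda>k. indicator {0..T} t *\<^sub>R ?gap k t powr p) \<longlongrightarrow> 0) at_top"
      by (intro AE_I2) (auto simp: indicator_def pointwise)
    show "\<forall>\<^sub>F k in at_top. AE t in lebesgue.
        norm (indicator {0..T} t *\<^sub>R ?gap k t powr p) \<le> indicator {0..T} t * (2 * C + \<bar>ln tau\<bar>) powr p"
      using eventually_ge_at_top[of 1] by eventually_elim (auto simp: indicator_def bounded)
  qed
qed

end
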